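(* Let $f:\mathcal D_n^+\to\mathcal D_n^+$ be weakly monotonic (non-decreasing or non-increasing for the entrywise order on diagonal matrices) and bounded from below and above, i.e. there are $0<\delta_m\le\delta_M$ with $\delta_mI_n\le f(\Delta)\le\delta_MI_n$ for all $\Delta$. Suppose $f$ is stable and satisfies $d_s(f(\Delta),f(\Delta'))<d_s(\Delta,\Delta')$ for all $\Delta\ne\Delta'$ in $\mathcal D_n^+$. Then there exists a unique $\Delta^*\in\mathcal D_n^+$ with $\Delta^*=f(\Delta^* )$.
   Context: $\mathcal D_n^+$ is the set of $n\times n$ diagonal matrices with positive diagonal entries. $d_s(\Delta,\Delta')=\max_i\frac{|\Delta_i-\Delta'_i|}{\sqrt{\Delta_i\Delta'_i}}$ (stable semi-metric). A map $f:\mathcal D_n^+\to\mathcal D_n^+$ is stable if $d_s(f(\Delta),f(\Delta'))\le d_s(\Delta,\Delta')$ for all $\Delta,\Delta'$. *)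

theory Defs
  imports "HOL-Analysis.Analysis"
begin

text \<open>A positive diagonal n x n matrix is represented by its diagonal, a vector in real^n
  with all entries positive. The index type 'n is finite, n = CARD('n).\<close>

definition posdiag :: "(real ^ 'n) set" where
  "posdiag = {D. \<forall>i. D $ i > 0}"

definition d_s :: "real ^ 'n \<Rightarrow> real ^ 'n \<Rightarrow> real" where
  "d_s D D' = Max (range (\<lambda>i. \<bar>D $ i - D' $ i\<bar> / sqrt (D $ i * D' $ i)))"

definition diag_le :: "real ^ 'n \<Rightarrow> real ^ 'n \<Rightarrow> bool" where
  "diag_le D D' \<longleftrightarrow> (\<forall>i. D $ i \<le> D' $ i)"

definition stable_map :: "(real ^ 'n \<Rightarrow> real ^ 'n) \<Rightarrow> bool" where
  "stable_map f \<longleftrightarrow> (\<forall>D\<in>posdiag. \<forall>D'\<in>posdiag. d_s (f D) (f D') \<le> d_s D D')"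

definition weakly_monotonic :: "(real ^ 'n \<Rightarrow> real ^ 'n) \<Rightarrow> bool" where
  "weakly_monotonic f \<longleftrightarrow>
     (\<forall>D\<in>posdiag. \<forall>D'\<in>posdiag. diag_le D D' \<longrightarrow> diag_le (f D) (f D')) \<or>
     (\<forall>D\<in>posdiag. \<forall>D'\<in>posdiag. diag_le D D' \<longrightarrow> diag_le (f D') (f D))"

end

theory Submission
  imports Defs
begin

text \<open>On the box \<open>[\<delta>m, \<delta>M]\<^sup>n\<close> the stable semi-metric and the Euclidean distance are
  comparable, so a stable map sending everything into that box is Lipschitz there. Brouwer's
  theorem then gives a fixed point, and strict contraction of \<open>d_s\<close> rules out a second one.\<close>

lemma d_s_ge_component:
  fixes D D' :: "real ^ 'n"
  shows "\<bar>D $ i - D' $ i\<bar> / sqrt (D $ i * D' $ i) \<le> d_s D D'"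
  unfolding d_s_def by (rule Max_ge) auto

lemma d_s_attained:
  fixes D D' :: "real ^ 'n"
  obtains i where "d_s D D' = \<bar>D $ i - D' $ i\<bar> / sqrt (D $ i * D' $ i)"
proof -
  have "d_s D D' \<in> range (\<lambda>i. \<bar>D $ i - D' $ i\<bar> / sqrt (D $ i * D' $ i))"
    unfolding d_s_def by (rule Max_in) auto
  then show ?thesis using that by auto
qed

lemma d_s_le_norm:
  fixes D D' :: "real ^ 'n"
  assumes "0 < a" and "\<forall>i. a \<le> D $ i \<and> a \<le> D' $ i"
  shows "d_s D D' \<le> norm (D - D') / a"
proof -
  obtain i where i: "d_s D D' = \<bar>D $ i - D' $ i\<bar> / sqrt (D $ i * D' $ i)"
    by (rule d_s_attained)
  have "a * a \<le> D $ i * D' $ i"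
    using assms by (meson less_le_trans less_imp_le mult_mono)
  then have "a \<le> sqrt (D $ i * D' $ i)"
    using real_sqrt_le_mono[of "a * a"] \<open>0 < a\<close> by simp
  then have "\<bar>D $ i - D' $ i\<bar> / sqrt (D $ i * D' $ i) \<le> \<bar>D $ i - D' $ i\<bar> / a"
    using \<open>0 < a\<close> by (simp add: frac_le)
  also have "\<dots> \<le> norm (D - D') / a"
    using component_le_norm_cart[of "D - D'" i] \<open>0 < a\<close> by (simp add: divide_right_mono)
  finally show ?thesis using i by simp
qed

lemma component_diff_le_d_s:
  fixes D D' :: "real ^ 'n"
  assumes "0 < D $ i" "0 < D' $ i" "D $ i \<le> b" "D' $ i \<le> b"
  shows "\<bar>D $ i - D' $ i\<bar> \<le> b * d_s D D'"
proof -
  have sqrt_pos: "0 < sqrt (D $ i * D' $ i)" using assms by simp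
  have "D $ i * D' $ i \<le> b * b" using assms by (simp add: mult_mono)
  then have sqrt_le: "sqrt (D $ i * D' $ i) \<le> b"
    using real_sqrt_le_mono[of _ "b * b"] assms by simp
  have ratio_le: "\<bar>D $ i - D' $ i\<bar> / sqrt (D $ i * D' $ i) \<le> d_s D D'"
    by (rule d_s_ge_component)
  then have "\<bar>D $ i - D' $ i\<bar> \<le> sqrt (D $ i * D' $ i) * d_s D D'"
    using sqrt_pos by (simp add: divide_le_eq mult.commute)
  also have "\<dots> \<le> b * d_s D D'"
    using sqrt_le ratio_le sqrt_pos by (intro mult_right_mono) (auto intro: order_trans[rotated])
  finally show ?thesis .
qed

lemma stable_map_lipschitz_on:
  fixes f :: "real ^ 'n \<Rightarrow> real ^ 'n"
  assumes stable: "stable_map f" and "0 < a" and "0 \<le> b"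
    and lower: "\<forall>D\<in>S. \<forall>i. a \<le> D $ i"
    and upper: "\<forall>D\<in>S. \<forall>i. 0 < f D $ i \<and> f D $ i \<le> b"
  shows "(real CARD('n) * (b / a))-lipschitz_on S f"
proof (rule lipschitz_onI)
  fix x y assume x: "x \<in> S" and y: "y \<in> S"
  have "x \<in> posdiag" "y \<in> posdiag"
    using x y lower \<open>0 < a\<close> unfolding posdiag_def by (auto intro: less_le_trans)
  then have "d_s (f x) (f y) \<le> d_s x y"
    using stable unfolding stable_map_def by blast
  also have "\<dots> \<le> norm (x - y) / a"
    using x y lower \<open>0 < a\<close> by (intro d_s_le_norm) auto
  finally have d_s_f: "d_s (f x) (f y) \<le> norm (x - y) / a" .
  have "\<bar>(f x - f y) $ i\<bar> \<le> b / a * norm (x - y)" for i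
  proof -
    have "\<bar>f x $ i - f y $ i\<bar> \<le> b * d_s (f x) (f y)"
      using x y upper by (intro component_diff_le_d_s) auto
    also have "\<dots> \<le> b * (norm (x - y) / a)"
      using d_s_f \<open>0 \<le> b\<close> by (rule mult_left_mono)
    finally show ?thesis by simp
  qed
  then have "(\<Sum>i\<in>UNIV. \<bar>(f x - f y) $ i\<bar>) \<le> (\<Sum>i\<in>(UNIV::'n set). b / a * norm (x - y))"
    by (intro sum_mono)
  then have "norm (f x - f y) \<le> real CARD('n) * (b / a) * norm (x - y)"
    using norm_le_l1_cart[of "f x - f y"] by simp
  then show "dist (f x) (f y) \<le> real CARD('n) * (b / a) * dist x y"
    by (simp add: dist_norm)
next
  show "0 \<le> real CARD('n) * (b / a)"
    using \<open>0 < a\<close> \<open>0 \<le> b\<close> by simp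
qed

lemma bounded_stable_map_has_fixed_point:
  fixes f :: "real ^ 'n \<Rightarrow> real ^ 'n"
  assumes stable: "stable_map f" and "0 < \<delta>m" and "\<delta>m \<le> \<delta>M"
    and bounds: "\<forall>D\<in>posdiag. \<forall>i. \<delta>m \<le> f D $ i \<and> f D $ i \<le> \<delta>M"
  obtains D where "D \<in> posdiag" "f D = D"
proof -
  define K where "K = cbox (vec \<delta>m :: real ^ 'n) (vec \<delta>M)"
  have K_iff: "D \<in> K \<longleftrightarrow> (\<forall>i. \<delta>m \<le> D $ i \<and> D $ i \<le> \<delta>M)" for D
    unfolding K_def mem_box_cart by simp
  have K_posdiag: "K \<subseteq> posdiag"
    using K_iff \<open>0 < \<delta>m\<close> unfolding posdiag_def by (auto intro: less_le_trans)
  have "(real CARD('n) * (\<delta>M / \<delta>m))-lipschitz_on K f"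
    using K_iff K_posdiag bounds \<open>0 < \<delta>m\<close> \<open>\<delta>m \<le> \<delta>M\<close>
    by (intro stable_map_lipschitz_on[OF stable]) (auto 0 4 intro: less_le_trans)
  then have "continuous_on K f"
    by (rule lipschitz_on_continuous_on)
  moreover have "K \<noteq> {}"
    using K_iff[of "vec \<delta>m"] \<open>\<delta>m \<le> \<delta>M\<close> by auto
  moreover have "f \<in> K \<rightarrow> K"
    using K_iff K_posdiag bounds by blast
  moreover have "compact K" "convex K"
    unfolding K_def by (simp_all add: convex_box)
  ultimately obtain D where "D \<in> K" "f D = D"
    using brouwer[of K f] by blast
  then show ?thesis
    using K_posdiag that by blast
qed

lemma strictly_contracting_fixed_point_unique:
  fixes f :: "real ^ 'n \<Rightarrow> real ^ 'n"
  assumes strict: "\<forall>D\<in>posdiag. \<forall>D'\<in>posdiag. D \<noteq> D' \<longrightarrow> d_s (f D) (f D') < d_s D D'"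
    and "D \<in> posdiag" "f D = D" and "D' \<in> posdiag" "f D' = D'"
  shows "D = D'"
  using strict assms(2-) by force

theorem theorem3:
  fixes f :: "real ^ 'n \<Rightarrow> real ^ 'n" and \<delta>m \<delta>M :: real
  assumes maps: "\<forall>D\<in>posdiag. f D \<in> posdiag"
    and mono: "weakly_monotonic f"
    and dpos: "0 < \<delta>m" and dle: "\<delta>m \<le> \<delta>M"
    and bounds: "\<forall>D\<in>posdiag. \<forall>i. \<delta>m \<le> f D $ i \<and> f D $ i \<le> \<delta>M"
    and stable: "stable_map f"
    and strict: "\<forall>D\<in>posdiag. \<forall>D'\<in>posdiag. D \<noteq> D' \<longrightarrow> d_s (f D) (f D') < d_s D D'"
  shows "\<exists>!D. D \<in> posdiag \<and> f D = D"
proof -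
  obtain D where "D \<in> posdiag" "f D = D"
    using bounded_stable_map_has_fixed_point[OF stable dpos dle bounds] .
  then show ?thesis
    using strictly_contracting_fixed_point_unique[OF strict] by blast
qed

end
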